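(* Let $A=\mathrm{diag}(G_1,\dots,G_m,[1])\in\mathbb{R}^{n\times n}$, $m\geq 1$, where the trailing block $[1]$ may or may not be present, with $G_j=\begin{bmatrix}c_j&s_j\\-s_j&c_j\end{bmatrix}$, $c_j^2+s_j^2=1$, $s_j\neq 0$, and $0<c_1<c_2<\cdots<c_m<1$. Let $v_0\in\mathbb{R}^n$ be a unit norm vector with $d(A,v_0)\geq 2$ and $v_0^{(1)}\neq 0$. Then the sequence $\{v_k\}$ of the iteration ACI($1$) below converges to a single limit vector.
   Context: Block partitioning: every $v\in\mathbb{R}^n$ is written as $v=[v^{(1)};\dots;v^{(m)};v^{(m+1)}]$ with $v^{(j)}\in\mathbb{R}^2$ for $j=1,\dots,m$ (conforming with the blocks $G_j$) and $v^{(m+1)}\in\mathbb{R}$ (present only if the block $[1]$ is present). ACI($1$): for $k=0,1,2,\dots$: $\widetilde w_k=(A-\alpha_kI)v_k$ with $\alpha_k=v_k^TAv_k$; $w_k=\widetilde w_k/\|\widetilde w_k\|$; $\widetilde v_{k+1}=(A^T-\beta_kI)w_k$ with $\beta_k=w_k^TAw_k$; $v_{k+1}=\widetilde v_{k+1}/\|\widetilde v_{k+1}\|$. $d(A,v)$ is the grade of $v$ w.r.t. $A$ (degree of the monic polynomial $p$ of smallest degree with $p(A)v=0$); $\|\cdot\|$ is the Euclidean norm. *)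

theory Defs
  imports "Jordan_Normal_Form.Matrix" "HOL-Computational_Algebra.Polynomial"
begin

text \<open>A = diag(G_1,...,G_m,[1]) of size n = 2m (+1 if the trailing block is present).
  Blocks are indexed j = 1..m; block G_j occupies rows/columns 2j-2, 2j-1 (0-based).\<close>
definition rot_block_mat :: "nat \<Rightarrow> (nat \<Rightarrow> real) \<Rightarrow> (nat \<Rightarrow> real) \<Rightarrow> bool \<Rightarrow> real mat" where
  "rot_block_mat m c s t =
     mat (2 * m + (if t then 1 else 0)) (2 * m + (if t then 1 else 0))
       (\<lambda>(i, j). if i div 2 = j div 2 \<and> i div 2 < m then
                   (let b = i div 2 + 1 in
                      if i = j then c b else if even i then s b else - s b)
                 else if i = j then 1 else 0)"

definition vnorm :: "real vec \<Rightarrow> real" where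
  "vnorm v = sqrt (v \<bullet> v)"

definition poly_mat_vec :: "real mat \<Rightarrow> real poly \<Rightarrow> real vec \<Rightarrow> real vec" where
  "poly_mat_vec A p v =
     vec (dim_row A) (\<lambda>r. \<Sum>i\<le>degree p. coeff p i * ((A ^\<^sub>m i) *\<^sub>v v) $ r)"

definition grade :: "real mat \<Rightarrow> real vec \<Rightarrow> nat" where
  "grade A v = (LEAST k. \<exists>p. lead_coeff p = 1 \<and> degree p = k \<and>
                          poly_mat_vec A p v = 0\<^sub>v (dim_row A))"

definition aci_step :: "real mat \<Rightarrow> real vec \<Rightarrow> real vec" where
  "aci_step A v =
     (let n = dim_row A;
          \<alpha> = v \<bullet> (A *\<^sub>v v);
          wt = (A - \<alpha> \<cdot>\<^sub>m 1\<^sub>m n) *\<^sub>v v;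
          w = (1 / vnorm wt) \<cdot>\<^sub>v wt;
          \<beta> = w \<bullet> (A *\<^sub>v w);
          vt = (transpose_mat A - \<beta> \<cdot>\<^sub>m 1\<^sub>m n) *\<^sub>v w
      in (1 / vnorm vt) \<cdot>\<^sub>v vt)"

definition aci :: "real mat \<Rightarrow> real vec \<Rightarrow> nat \<Rightarrow> real vec" where
  "aci A v0 k = (aci_step A ^^ k) v0"

end

theory Submission
  imports Defs "HOL-Analysis.L2_Norm"
begin

text \<open>Write \<open>e\<^sub>j(x)\<close> for the energy of \<open>x\<close> on the block \<open>G\<^sub>j\<close>. On that block \<open>A - \<alpha> I\<close> and
  \<open>A\<^sup>T - \<alpha> I\<close> act as rotation-dilations multiplying \<open>e\<^sub>j\<close> by \<open>1 - 2 \<alpha> c\<^sub>j + \<alpha>\<^sup>2\<close>, and the trailing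
  block behaves like a block with \<open>c = 1\<close>. Every Rayleigh quotient of a unit vector lies in
  \<open>[c\<^sub>1, 1]\<close>, and \<open>c\<^sub>1\<close> is the smallest cosine, so the first block gains the most: the ratio
  \<open>R\<close> of the energy outside \<open>G\<^sub>1\<close> to \<open>e\<^sub>1\<close> shrinks by the fixed factor \<open>1 - c\<^sub>1 (c\<^sub>2 - c\<^sub>1)\<close> in
  each half-step. On \<open>G\<^sub>1\<close> the product \<open>(A\<^sup>T - \<beta> I) (A - \<alpha> I)\<close> is a multiple of the identity up
  to a term of size \<open>\<bar>\<alpha> - \<beta>\<bar> \<le> R\<close>, and outside \<open>G\<^sub>1\<close> the iterate has size \<open>\<le> sqrt R\<close>; hence
  one step moves \<open>v\<^sub>k\<close> by \<open>O(sqrt R(v\<^sub>k))\<close>. These displacements decay geometrically, so the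
  iterates converge.\<close>

lemma sum_lessThan_double:
  "(\<Sum>i<2 * M. g i) = (\<Sum>j<M. g (2 * j) + g (Suc (2 * j)))"
  by (induction M) (simp_all add: lessThan_Suc add_ac)

lemma L2_set_uminus [simp]: "L2_set (\<lambda>i. - f i) A = L2_set f A"
  by (simp add: L2_set_def)

lemma L2_set_scale: "L2_set (\<lambda>i. r * f i) A = \<bar>r\<bar> * L2_set f A"
proof -
  have "L2_set (\<lambda>i. r * f i) A = L2_set (\<lambda>i. \<bar>r\<bar> * f i) A"
    by (simp add: L2_set_def power_mult_distrib)
  also have "\<dots> = \<bar>r\<bar> * L2_set f A" by (simp add: L2_set_right_distrib)
  finally show ?thesis .
qed

lemma L2_set_normalize_diff_le:
  assumes x: "L2_set x I = 1" and u: "0 < L2_set u I" and l: "0 < l"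
  shows "L2_set (\<lambda>i. u i / L2_set u I - x i) I \<le> 2 * L2_set (\<lambda>i. u i - l * x i) I / l"
proof -
  define N where "N = L2_set u I"
  define D where "D = L2_set (\<lambda>i. u i - l * x i) I"
  have lx: "L2_set (\<lambda>i. l * x i) I = l" using x l by (simp add: L2_set_scale)
  have "N = L2_set (\<lambda>i. (u i - l * x i) + l * x i) I" by (simp add: N_def)
  also have "\<dots> \<le> D + l"
    using L2_set_triangle_ineq[of "\<lambda>i. u i - l * x i" "\<lambda>i. l * x i" I] lx by (simp add: D_def)
  finally have N_le: "N \<le> D + l" .
  have "l = L2_set (\<lambda>i. - (u i - l * x i) + u i) I" using lx by simp
  also have "\<dots> \<le> D + N"
    using L2_set_triangle_ineq[of "\<lambda>i. - (u i - l * x i)" u I] by (simp only: L2_set_uminus D_def N_def)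
  finally have l_le: "l \<le> D + N" .
  have "(\<lambda>i. u i / N - u i / l) = (\<lambda>i. (1 / N - 1 / l) * u i)" by (auto simp: field_simps)
  then have "L2_set (\<lambda>i. u i / N - u i / l) I = \<bar>1 / N - 1 / l\<bar> * N"
    by (simp add: L2_set_scale N_def)
  also have "\<dots> = \<bar>l - N\<bar> / l" using u l by (simp add: N_def field_simps abs_divide abs_mult)
  also have "\<dots> \<le> D / l" using N_le l_le l by (simp add: divide_right_mono)
  finally have rescale: "L2_set (\<lambda>i. u i / N - u i / l) I \<le> D / l" .
  have scaled: "(\<lambda>i. u i / l - x i) = (\<lambda>i. (1 / l) * (u i - l * x i))"
    using l by (auto simp: field_simps)
  have shift: "L2_set (\<lambda>i. u i / l - x i) I = D / l"
    unfolding scaled L2_set_scale D_def using l by simp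
  have "L2_set (\<lambda>i. u i / N - x i) I = L2_set (\<lambda>i. (u i / N - u i / l) + (u i / l - x i)) I" by simp
  also have "\<dots> \<le> L2_set (\<lambda>i. u i / N - u i / l) I + L2_set (\<lambda>i. u i / l - x i) I"
    by (rule L2_set_triangle_ineq)
  also have "\<dots> \<le> 2 * D / l" using rescale shift by simp
  finally show ?thesis by (simp add: N_def D_def)
qed

lemma square_diff_le: "(p - q)\<^sup>2 \<le> 2 * p\<^sup>2 + 2 * (q::real)\<^sup>2"
proof -
  have "2 * p\<^sup>2 + 2 * q\<^sup>2 - (p - q)\<^sup>2 = (p + q)\<^sup>2" by (simp add: power2_eq_square algebra_simps)
  then show ?thesis using zero_le_power2[of "p + q"] by linarith
qed

lemma convergent_if_increments_le_geometric:
  fixes f :: "nat \<Rightarrow> real"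
  assumes "\<And>k. \<bar>f (Suc k) - f k\<bar> \<le> C * q ^ k" and "0 \<le> q" "q < 1"
  shows "convergent f"
proof -
  have "summable (\<lambda>k. C * q ^ k)" using assms by (intro summable_mult summable_geometric) simp
  then have "summable (\<lambda>k. f (Suc k) - f k)"
    by (rule summable_comparison_test[rotated]) (use assms in simp)
  then have "(\<lambda>n. f n - f 0) \<longlonglongrightarrow> (\<Sum>k. f (Suc k) - f k)"
    using summable_LIMSEQ by (fastforce simp: sum_lessThan_telescope)
  then have "(\<lambda>n. f n - f 0 + f 0) \<longlonglongrightarrow> (\<Sum>k. f (Suc k) - f k) + f 0"
    by (intro tendsto_add) auto
  then show ?thesis by (auto intro: convergentI)
qed

lemma mult_shift_vec:
  fixes B :: "real mat"
  assumes "B \<in> carrier_mat n n" "v \<in> carrier_vec n" "\<forall>k<n. v $ k = y k" "i < n"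
  shows "((B - a \<cdot>\<^sub>m 1\<^sub>m n) *\<^sub>v v) $ i = (\<Sum>k = 0..<n. B $$ (i, k) * y k) - a * y i"
proof -
  have "((B - a \<cdot>\<^sub>m 1\<^sub>m n) *\<^sub>v v) $ i
      = (\<Sum>k = 0..<n. (B $$ (i, k) - a * (if i = k then 1 else 0)) * y k)"
    using assms by (auto simp: scalar_prod_def intro!: sum.cong)
  also have "\<dots> = (\<Sum>k = 0..<n. B $$ (i, k) * y k - (if k = i then a * y i else 0))"
    by (rule sum.cong) (auto simp: algebra_simps)
  also have "\<dots> = (\<Sum>k = 0..<n. B $$ (i, k) * y k) - a * y i"
    using assms(4) by (simp add: sum_subtractf)
  finally show ?thesis .
qed

definition block_partner :: "nat \<Rightarrow> nat" where
  "block_partner i = (if even i then Suc i else i - 1)"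

lemma block_partner_involution [simp]: "block_partner (block_partner i) = i"
  by (simp add: block_partner_def)

lemma block_partner_div_2 [simp]: "block_partner i div 2 = i div 2"
  unfolding block_partner_def by presburger

lemma even_block_partner [simp]: "even (block_partner i) \<longleftrightarrow> odd i"
  unfolding block_partner_def by presburger

lemma block_partner_neq [simp]: "block_partner i \<noteq> i" "i \<noteq> block_partner i"
  unfolding block_partner_def by presburger+

lemma same_block_iff: "k div 2 = i div 2 \<longleftrightarrow> k = i \<or> k = block_partner i"
  unfolding block_partner_def by presburger

section \<open>The block rotation matrix in coordinates\<close>

locale rotation_blocks =
  fixes m n :: nat and c s :: "nat \<Rightarrow> real" and t :: bool
  assumes m_pos: "m \<ge> 1" and n_def: "n = 2 * m + (if t then 1 else 0)"
    and cs_unit: "\<forall>j\<in>{1..m}. (c j)\<^sup>2 + (s j)\<^sup>2 = 1"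
    and s_nonzero: "\<forall>j\<in>{1..m}. s j \<noteq> 0"
    and c_1_pos: "0 < c 1"
    and c_strict_mono: "\<forall>j\<in>{1..<m}. c j < c (Suc j)"
    and c_m_less_1: "c m < 1"
begin

abbreviation "A \<equiv> rot_block_mat m c s t"

definition offdiag :: "nat \<Rightarrow> real" where
  "offdiag i = (if even i then s (i div 2 + 1) else - s (i div 2 + 1))"

definition A_apply :: "(nat \<Rightarrow> real) \<Rightarrow> nat \<Rightarrow> real" where
  "A_apply x i =
     (if i < 2 * m then c (i div 2 + 1) * x i + offdiag i * x (block_partner i) else x i)"

definition AT_apply :: "(nat \<Rightarrow> real) \<Rightarrow> nat \<Rightarrow> real" where
  "AT_apply x i =
     (if i < 2 * m then c (i div 2 + 1) * x i - offdiag i * x (block_partner i) else x i)"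

lemma offdiag_block_partner [simp]: "offdiag (block_partner i) = - offdiag i"
  by (simp add: offdiag_def)

lemma block_partner_less_iff [simp]: "block_partner i < 2 * m \<longleftrightarrow> i < 2 * m"
proof -
  have "\<And>j. j < 2 * m \<longleftrightarrow> j div 2 < m" by auto
  then show ?thesis by (metis block_partner_div_2)
qed

lemma block_partner_less_n: "i < 2 * m \<Longrightarrow> block_partner i < n"
  using block_partner_less_iff[of i] n_def by linarith

lemma A_carrier: "A \<in> carrier_mat n n"
  using n_def by (simp add: rot_block_mat_def)

lemma A_entry:
  assumes "i < n" "k < n"
  shows "A $$ (i, k) = (if k = i then (if i < 2 * m then c (i div 2 + 1) else 1) else 0)
    + (if i < 2 * m \<and> k = block_partner i then offdiag i else 0)"
proof -
  have "i div 2 < m \<longleftrightarrow> i < 2 * m" by auto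
  then show ?thesis using assms n_def same_block_iff[of k i]
    by (auto simp: rot_block_mat_def offdiag_def Let_def)
qed

lemma A_entry_transposed:
  assumes "i < n" "k < n"
  shows "A $$ (k, i) = (if k = i then (if i < 2 * m then c (i div 2 + 1) else 1) else 0)
    - (if i < 2 * m \<and> k = block_partner i then offdiag i else 0)"
proof -
  have "i = block_partner k \<longleftrightarrow> k = block_partner i" by auto
  then show ?thesis using A_entry[of k i] assms by auto
qed

lemma sum_A_row:
  assumes "i < n"
  shows "(\<Sum>k = 0..<n. A $$ (i, k) * y k) = A_apply y i"
proof -
  have "(\<Sum>k = 0..<n. A $$ (i, k) * y k) =
      (\<Sum>k = 0..<n. (if k = i then (if i < 2 * m then c (i div 2 + 1) else 1) * y i else 0)
        + (if i < 2 * m \<and> k = block_partner i then offdiag i * y (block_partner i) else 0))"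
    using assms by (intro sum.cong) (auto simp: A_entry)
  also have "\<dots> = A_apply y i"
    using assms block_partner_less_n[of i] by (simp add: sum.distrib A_apply_def)
  finally show ?thesis .
qed

lemma sum_A_col:
  assumes "i < n"
  shows "(\<Sum>k = 0..<n. A $$ (k, i) * y k) = AT_apply y i"
proof -
  have "(\<Sum>k = 0..<n. A $$ (k, i) * y k) =
      (\<Sum>k = 0..<n. (if k = i then (if i < 2 * m then c (i div 2 + 1) else 1) * y i else 0)
        - (if i < 2 * m \<and> k = block_partner i then offdiag i * y (block_partner i) else 0))"
    using assms by (intro sum.cong) (auto simp: A_entry_transposed left_diff_distrib)
  also have "\<dots> = AT_apply y i"
    using assms block_partner_less_n[of i] by (simp add: sum_subtractf AT_apply_def)
  finally show ?thesis .
qed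

lemma A_apply_even: "j < m \<Longrightarrow> A_apply x (2 * j) = c (j + 1) * x (2 * j) + s (j + 1) * x (Suc (2 * j))"
  by (simp add: A_apply_def offdiag_def block_partner_def)

lemma A_apply_odd: "j < m \<Longrightarrow> A_apply x (Suc (2 * j)) = c (j + 1) * x (Suc (2 * j)) - s (j + 1) * x (2 * j)"
  by (simp add: A_apply_def offdiag_def block_partner_def)

lemma A_apply_last: "A_apply x (2 * m) = x (2 * m)"
  by (simp add: A_apply_def)

lemma AT_apply_even: "j < m \<Longrightarrow> AT_apply x (2 * j) = c (j + 1) * x (2 * j) - s (j + 1) * x (Suc (2 * j))"
  by (simp add: AT_apply_def offdiag_def block_partner_def)

lemma AT_apply_odd: "j < m \<Longrightarrow> AT_apply x (Suc (2 * j)) = c (j + 1) * x (Suc (2 * j)) + s (j + 1) * x (2 * j)"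
  by (simp add: AT_apply_def offdiag_def block_partner_def)

lemma AT_apply_last: "AT_apply x (2 * m) = x (2 * m)"
  by (simp add: AT_apply_def)

text \<open>Vectors are handled as functions \<open>nat \<Rightarrow> real\<close> of which only the values below \<open>n\<close>
  matter; \<open>aci_map\<close> is \<open>aci_step A\<close> in these coordinates.\<close>

definition inner_n :: "(nat \<Rightarrow> real) \<Rightarrow> (nat \<Rightarrow> real) \<Rightarrow> real" where
  "inner_n x y = (\<Sum>i = 0..<n. x i * y i)"

definition norm_n :: "(nat \<Rightarrow> real) \<Rightarrow> real" where
  "norm_n x = L2_set x {0..<n}"

definition scale :: "real \<Rightarrow> (nat \<Rightarrow> real) \<Rightarrow> nat \<Rightarrow> real" where
  "scale r x = (\<lambda>i. r * x i)"

definition normalize_n :: "(nat \<Rightarrow> real) \<Rightarrow> nat \<Rightarrow> real" where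
  "normalize_n x = scale (1 / norm_n x) x"

definition A_shift :: "real \<Rightarrow> (nat \<Rightarrow> real) \<Rightarrow> nat \<Rightarrow> real" where
  "A_shift a x i = A_apply x i - a * x i"

definition AT_shift :: "real \<Rightarrow> (nat \<Rightarrow> real) \<Rightarrow> nat \<Rightarrow> real" where
  "AT_shift a x i = AT_apply x i - a * x i"

definition rayleigh :: "(nat \<Rightarrow> real) \<Rightarrow> real" where
  "rayleigh x = inner_n x (A_apply x)"

definition aci_map :: "(nat \<Rightarrow> real) \<Rightarrow> nat \<Rightarrow> real" where
  "aci_map x =
     (let w = normalize_n (A_shift (rayleigh x) x) in normalize_n (AT_shift (rayleigh w) w))"

lemma norm_n_eq_sqrt_inner: "norm_n x = sqrt (inner_n x x)"
  by (simp add: norm_n_def inner_n_def L2_set_def power2_eq_square)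

lemma mult_A_vec:
  assumes "v \<in> carrier_vec n" "\<forall>k<n. v $ k = y k" "i < n"
  shows "(A *\<^sub>v v) $ i = A_apply y i"
  using assms A_carrier sum_A_row[of i y] by (auto simp: scalar_prod_def intro!: sum.cong)

lemma mult_A_shift_vec:
  assumes "v \<in> carrier_vec n" "\<forall>k<n. v $ k = y k" "i < n"
  shows "((A - a \<cdot>\<^sub>m 1\<^sub>m n) *\<^sub>v v) $ i = A_shift a y i"
  using mult_shift_vec[OF A_carrier assms] assms(3) by (simp add: sum_A_row A_shift_def)

lemma mult_AT_shift_vec:
  assumes "v \<in> carrier_vec n" "\<forall>k<n. v $ k = y k" "i < n"
  shows "((transpose_mat A - a \<cdot>\<^sub>m 1\<^sub>m n) *\<^sub>v v) $ i = AT_shift a y i"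
  using mult_shift_vec[of "transpose_mat A" n v y i a] assms A_carrier
  by (simp add: sum_A_col AT_shift_def)

lemma shifted_A_carrier:
  "A - a \<cdot>\<^sub>m 1\<^sub>m n \<in> carrier_mat n n" "transpose_mat A - a \<cdot>\<^sub>m 1\<^sub>m n \<in> carrier_mat n n"
  using A_carrier by auto

lemma scalar_prod_eq_inner_n:
  assumes "w \<in> carrier_vec n" "\<forall>k<n. v $ k = x k" "\<forall>k<n. w $ k = y k"
  shows "v \<bullet> w = inner_n x y"
  using assms by (auto simp: scalar_prod_def inner_n_def intro!: sum.cong)

lemma vnorm_eq_norm_n:
  assumes "v \<in> carrier_vec n" "\<forall>k<n. v $ k = x k"
  shows "vnorm v = norm_n x"
  using scalar_prod_eq_inner_n[OF assms(1) assms(2) assms(2)]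
  by (simp add: vnorm_def norm_n_eq_sqrt_inner)

lemma normalize_vec:
  assumes "v \<in> carrier_vec n" "\<forall>k<n. v $ k = x k"
  shows "(1 / vnorm v) \<cdot>\<^sub>v v \<in> carrier_vec n" "\<forall>k<n. ((1 / vnorm v) \<cdot>\<^sub>v v) $ k = normalize_n x k"
  using assms vnorm_eq_norm_n[OF assms] by (auto simp: normalize_n_def scale_def)

lemma aci_step_eq_aci_map:
  assumes v: "v \<in> carrier_vec n"
  shows "aci_step A v = vec n (aci_map (($) v))"
proof -
  have dim_row_A: "dim_row A = n" using A_carrier by simp
  define x where "x = ($) v"
  have vx: "\<forall>k<n. v $ k = x k" by (simp add: x_def)
  have Av: "A *\<^sub>v v \<in> carrier_vec n" using A_carrier v by simp
  have a: "v \<bullet> (A *\<^sub>v v) = rayleigh x"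
    using scalar_prod_eq_inner_n[OF Av vx] mult_A_vec[OF v vx] by (simp add: rayleigh_def)
  define wt where "wt = (A - rayleigh x \<cdot>\<^sub>m 1\<^sub>m n) *\<^sub>v v"
  have wt: "wt \<in> carrier_vec n" "\<forall>k<n. wt $ k = A_shift (rayleigh x) x k"
    using mult_mat_vec_carrier[OF shifted_A_carrier(1) v] mult_A_shift_vec[OF v vx]
    by (auto simp: wt_def)
  define w where "w = (1 / vnorm wt) \<cdot>\<^sub>v wt"
  define y where "y = normalize_n (A_shift (rayleigh x) x)"
  have w: "w \<in> carrier_vec n" "\<forall>k<n. w $ k = y k"
    using normalize_vec[OF wt] by (simp_all add: w_def y_def)
  have Aw: "A *\<^sub>v w \<in> carrier_vec n" using A_carrier w by simp
  have b: "w \<bullet> (A *\<^sub>v w) = rayleigh y"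
    using scalar_prod_eq_inner_n[OF Aw w(2)] mult_A_vec[OF w] by (simp add: rayleigh_def)
  define vt where "vt = (transpose_mat A - rayleigh y \<cdot>\<^sub>m 1\<^sub>m n) *\<^sub>v w"
  have vt: "vt \<in> carrier_vec n" "\<forall>k<n. vt $ k = AT_shift (rayleigh y) y k"
    using mult_mat_vec_carrier[OF shifted_A_carrier(2) w(1)] mult_AT_shift_vec[OF w]
    by (auto simp: vt_def)
  have "aci_step A v = (1 / vnorm vt) \<cdot>\<^sub>v vt"
    using A_carrier unfolding aci_step_def Let_def dim_row_A a wt_def[symmetric] w_def[symmetric] b
      vt_def[symmetric]
    by simp
  also have "\<dots> = vec n (aci_map x)"
    using normalize_vec[OF vt] by (intro eq_vecI) (auto simp: aci_map_def Let_def y_def)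
  finally show ?thesis by (simp add: x_def)
qed

section \<open>Block energies\<close>

text \<open>Blocks are indexed from \<open>0\<close> here: \<open>block_energy x j\<close> is the energy on \<open>G\<^sub>j\<^sub>+\<^sub>1\<close>, whereas
  \<open>c\<close>, \<open>s\<close> and \<open>gain\<close> use the indices \<open>1..m\<close> of the paper.\<close>

definition block_energy :: "(nat \<Rightarrow> real) \<Rightarrow> nat \<Rightarrow> real" where
  "block_energy x j = (x (2 * j))\<^sup>2 + (x (Suc (2 * j)))\<^sup>2"

definition tail_energy :: "(nat \<Rightarrow> real) \<Rightarrow> real" where
  "tail_energy x = (if t then (x (2 * m))\<^sup>2 else 0)"

definition off_energy :: "(nat \<Rightarrow> real) \<Rightarrow> real" where
  "off_energy x = (\<Sum>j\<in>{1..<m}. block_energy x j) + tail_energy x"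

definition energy_ratio :: "(nat \<Rightarrow> real) \<Rightarrow> real" where
  "energy_ratio x = off_energy x / block_energy x 0"

text \<open>On block \<open>k\<close> the map \<open>A - a I\<close> acts as multiplication by the complex number
  \<open>(c k - a) - i s k\<close>, and \<open>A\<^sup>T - a I\<close> by its conjugate; both multiply the block's energy by
  \<open>gain a k\<close>.\<close>
definition gain :: "real \<Rightarrow> nat \<Rightarrow> real" where
  "gain a k = (c k - a)\<^sup>2 + (s k)\<^sup>2"

text \<open>The trailing block \<open>[1]\<close> behaves like a block with cosine \<open>1\<close>, which is why \<open>1\<close> replaces
  \<open>c 2\<close> when \<open>m = 1\<close>.\<close>
definition gap :: real where
  "gap = (if m \<ge> 2 then c 2 else 1) - c 1"

definition contraction :: real where
  "contraction = 1 - c 1 * gap"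

lemma sum_below_n:
  "(\<Sum>i = 0..<n. g i) = (\<Sum>j<m. g (2 * j) + g (Suc (2 * j))) + (if t then g (2 * m) else 0)"
  using n_def by (cases t) (simp_all add: atLeast0LessThan sum_lessThan_double)

lemma sum_blocks_split_first: "(\<Sum>j<m. h j) = h 0 + (\<Sum>j\<in>{1..<m}. h j)"
proof -
  have "{..<m} = insert 0 {1..<m}" using m_pos by auto
  then show ?thesis by simp
qed

lemma inner_n_self: "inner_n x x = (\<Sum>j<m. block_energy x j) + tail_energy x"
  unfolding inner_n_def sum_below_n
  by (simp add: block_energy_def tail_energy_def power2_eq_square)

lemma inner_n_self_split: "inner_n x x = block_energy x 0 + off_energy x"
  unfolding inner_n_self sum_blocks_split_first off_energy_def by simp

lemma rayleigh_eq: "rayleigh x = (\<Sum>j<m. c (j + 1) * block_energy x j) + tail_energy x"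
  unfolding rayleigh_def inner_n_def sum_below_n
  by (auto simp: block_energy_def tail_energy_def A_apply_even A_apply_odd A_apply_last
      intro!: sum.cong) (simp_all add: power2_eq_square algebra_simps)

lemma block_energy_A_shift:
  "j < m \<Longrightarrow> block_energy (A_shift a x) j = gain a (j + 1) * block_energy x j"
  by (simp add: block_energy_def gain_def A_shift_def A_apply_even A_apply_odd)
    (simp add: power2_eq_square algebra_simps)

lemma block_energy_AT_shift:
  "j < m \<Longrightarrow> block_energy (AT_shift a x) j = gain a (j + 1) * block_energy x j"
  by (simp add: block_energy_def gain_def AT_shift_def AT_apply_even AT_apply_odd)
    (simp add: power2_eq_square algebra_simps)

lemma tail_energy_A_shift: "tail_energy (A_shift a x) = (1 - a)\<^sup>2 * tail_energy x"
  by (simp add: tail_energy_def A_shift_def A_apply_last) (simp add: power2_eq_square algebra_simps)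

lemma tail_energy_AT_shift: "tail_energy (AT_shift a x) = (1 - a)\<^sup>2 * tail_energy x"
  by (simp add: tail_energy_def AT_shift_def AT_apply_last) (simp add: power2_eq_square algebra_simps)

lemma block_energy_scale: "block_energy (scale r x) j = r\<^sup>2 * block_energy x j"
  by (simp add: block_energy_def scale_def power2_eq_square algebra_simps)

lemma tail_energy_scale: "tail_energy (scale r x) = r\<^sup>2 * tail_energy x"
  by (simp add: tail_energy_def scale_def power2_eq_square algebra_simps)

lemma off_energy_scale: "off_energy (scale r x) = r\<^sup>2 * off_energy x"
  by (simp add: off_energy_def block_energy_scale tail_energy_scale sum_distrib_left algebra_simps)

lemma block_energy_nonneg: "0 \<le> block_energy x j"
  by (simp add: block_energy_def)

lemma tail_energy_nonneg: "0 \<le> tail_energy x"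
  by (simp add: tail_energy_def)

lemma off_energy_nonneg: "0 \<le> off_energy x"
  by (simp add: off_energy_def block_energy_nonneg tail_energy_nonneg sum_nonneg)

lemma energy_ratio_nonneg: "0 \<le> energy_ratio x"
  by (simp add: energy_ratio_def off_energy_nonneg block_energy_nonneg)

lemma c_mono: "1 \<le> i \<Longrightarrow> i \<le> k \<Longrightarrow> k \<le> m \<Longrightarrow> c i \<le> c k"
proof (induction k)
  case (Suc k)
  show ?case
  proof (cases "i = Suc k")
    case False
    then have "c i \<le> c k" using Suc by simp
    moreover have "c k < c (Suc k)" using c_strict_mono Suc False by auto
    ultimately show ?thesis by simp
  qed simp
qed simp

lemma c_bounds: "k \<in> {1..m} \<Longrightarrow> c 1 \<le> c k \<and> c k < 1"
  using c_mono[of 1 k] c_mono[of k m] c_m_less_1 by fastforce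

lemma gap_pos: "0 < gap"
proof (cases "m \<ge> 2")
  case True
  then have "c 1 < c (Suc 1)" using c_strict_mono by auto
  then show ?thesis using True by (simp add: gap_def numeral_2_eq_2)
next
  case False
  then show ?thesis using c_bounds[of 1] m_pos by (simp add: gap_def)
qed

lemma c_1_plus_gap_le_1: "c 1 + gap \<le> 1"
  using c_bounds[of 2] by (auto simp: gap_def)

lemma c_1_plus_gap_le: "k \<in> {2..m} \<Longrightarrow> c 1 + gap \<le> c k"
  using c_mono[of 2 k] by (auto simp: gap_def)

lemma contraction_pos: "0 < contraction"
proof -
  have "c 1 * gap < 1 * 1"
    using gap_pos c_1_plus_gap_le_1 c_bounds[of 1] m_pos c_1_pos by (intro mult_strict_mono) auto
  then show ?thesis by (simp add: contraction_def)
qed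

lemma contraction_less_1: "contraction < 1"
  using gap_pos c_1_pos by (simp add: contraction_def)

lemma gain_eq: "k \<in> {1..m} \<Longrightarrow> gain a k = 1 - 2 * a * c k + a\<^sup>2"
  using cs_unit by (auto simp: gain_def power2_eq_square algebra_simps)

lemma s_1_sq_pos: "0 < (s 1)\<^sup>2"
  using s_nonzero m_pos by auto

lemma s_1_sq_le_1: "(s 1)\<^sup>2 \<le> 1"
proof -
  have "(c 1)\<^sup>2 + (s 1)\<^sup>2 = 1" using cs_unit m_pos by auto
  then show ?thesis using zero_le_power2[of "c 1"] by linarith
qed

lemma gain_le_2: "0 \<le> a \<Longrightarrow> a \<le> 1 \<Longrightarrow> k \<in> {1..m} \<Longrightarrow> gain a k \<le> 2"
proof -
  assume a: "0 \<le> a" "a \<le> 1" and k: "k \<in> {1..m}"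
  have "0 \<le> a * c k" using a c_bounds[OF k] c_1_pos by simp
  moreover have "a\<^sup>2 \<le> 1" using a by (simp add: power_le_one)
  ultimately show ?thesis using gain_eq[OF k, of a] by simp
qed

lemma gain_nonneg: "0 \<le> gain a k"
  by (simp add: gain_def)

section \<open>One step of the iteration\<close>

lemma rayleigh_bounds:
  assumes "inner_n x x = 1"
  shows "c 1 \<le> rayleigh x" "rayleigh x \<le> 1" "rayleigh x - c 1 \<le> off_energy x"
proof -
  have unit: "(\<Sum>j<m. block_energy x j) + tail_energy x = 1" using assms inner_n_self by simp
  have c_range: "\<And>j. j < m \<Longrightarrow> c 1 \<le> c (j + 1) \<and> c (j + 1) < 1" using c_bounds by auto
  have "rayleigh x - c 1 = rayleigh x - c 1 * ((\<Sum>j<m. block_energy x j) + tail_energy x)"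
    using unit by simp
  also have "\<dots> = (\<Sum>j<m. (c (j + 1) - c 1) * block_energy x j) + (1 - c 1) * tail_energy x"
    by (simp add: rayleigh_eq algebra_simps sum_subtractf sum_distrib_left)
  finally have lower: "rayleigh x - c 1
      = (\<Sum>j<m. (c (j + 1) - c 1) * block_energy x j) + (1 - c 1) * tail_energy x" .
  have "1 - rayleigh x = ((\<Sum>j<m. block_energy x j) + tail_energy x) - rayleigh x" using unit by simp
  also have "\<dots> = (\<Sum>j<m. (1 - c (j + 1)) * block_energy x j)"
    by (simp add: rayleigh_eq algebra_simps sum_subtractf sum_distrib_left)
  finally have upper: "1 - rayleigh x = (\<Sum>j<m. (1 - c (j + 1)) * block_energy x j)" .
  have "0 \<le> (\<Sum>j<m. (c (j + 1) - c 1) * block_energy x j)"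
    using c_range by (intro sum_nonneg) (simp add: block_energy_nonneg)
  moreover have "0 \<le> (1 - c 1) * tail_energy x"
    using c_bounds[of 1] m_pos tail_energy_nonneg by simp
  ultimately show "c 1 \<le> rayleigh x" using lower by linarith
  have "0 \<le> (\<Sum>j<m. (1 - c (j + 1)) * block_energy x j)"
    using c_range by (intro sum_nonneg) (simp add: block_energy_nonneg less_imp_le)
  then show "rayleigh x \<le> 1" using upper by linarith
  have "(\<Sum>j<m. (c (j + 1) - c 1) * block_energy x j)
      = (\<Sum>j\<in>{1..<m}. (c (j + 1) - c 1) * block_energy x j)"
    by (simp add: sum_blocks_split_first)
  also have "\<dots> \<le> (\<Sum>j\<in>{1..<m}. block_energy x j)"
  proof (intro sum_mono)
    fix j assume "j \<in> {1..<m}"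
    then have "0 \<le> c (j + 1) - c 1" "c (j + 1) - c 1 \<le> 1" using c_range[of j] c_1_pos by auto
    then show "(c (j + 1) - c 1) * block_energy x j \<le> block_energy x j"
      using block_energy_nonneg mult_left_le_one_le by blast
  qed
  finally have "(\<Sum>j<m. (c (j + 1) - c 1) * block_energy x j) \<le> (\<Sum>j\<in>{1..<m}. block_energy x j)" .
  moreover have "(1 - c 1) * tail_energy x \<le> tail_energy x"
    using c_1_pos tail_energy_nonneg c_bounds[of 1] m_pos by (simp add: mult_left_le_one_le)
  ultimately show "rayleigh x - c 1 \<le> off_energy x" using lower by (simp add: off_energy_def)
qed

lemma off_energy_gain_le:
  assumes block: "\<forall>j<m. block_energy y j = gain a (j + 1) * block_energy x j"
    and tail: "tail_energy y = (1 - a)\<^sup>2 * tail_energy x" and a: "0 \<le> a"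
  shows "off_energy y \<le> (gain a 1 - 2 * a * gap) * off_energy x"
proof -
  have one: "1 \<in> {1..m}" using m_pos by simp
  have "(\<Sum>j\<in>{1..<m}. block_energy y j) \<le> (\<Sum>j\<in>{1..<m}. (gain a 1 - 2 * a * gap) * block_energy x j)"
  proof (intro sum_mono)
    fix j assume j: "j \<in> {1..<m}"
    then have "a * (c 1 + gap) \<le> a * c (j + 1)"
      using c_1_plus_gap_le[of "j + 1"] a by (simp add: mult_left_mono)
    then have "gain a (j + 1) \<le> gain a 1 - 2 * a * gap"
      using j gain_eq[of "j + 1" a] gain_eq[OF one, of a] by (simp add: algebra_simps)
    then show "block_energy y j \<le> (gain a 1 - 2 * a * gap) * block_energy x j"
      using block j block_energy_nonneg[of x j] by (simp add: mult_right_mono)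
  qed
  moreover have "tail_energy y \<le> (gain a 1 - 2 * a * gap) * tail_energy x"
  proof -
    have "a * (c 1 + gap) \<le> a * 1" using a c_1_plus_gap_le_1 mult_left_mono by blast
    then have "(1 - a)\<^sup>2 \<le> gain a 1 - 2 * a * gap"
      using gain_eq[OF one, of a] by (simp add: power2_eq_square algebra_simps)
    then show ?thesis using tail tail_energy_nonneg[of x] by (simp add: mult_right_mono)
  qed
  ultimately show ?thesis by (simp add: off_energy_def sum_distrib_left[symmetric] distrib_left)
qed

lemma energy_ratio_contracts:
  assumes block: "\<forall>j<m. block_energy y j = gain a (j + 1) * block_energy x j"
    and tail: "tail_energy y = (1 - a)\<^sup>2 * tail_energy x"
    and a: "c 1 \<le> a" "a \<le> 1" and pos: "0 < block_energy x 0"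
  shows "0 < block_energy y 0" "energy_ratio y \<le> contraction * energy_ratio x"
proof -
  define g where "g = gain a 1"
  have g_pos: "0 < g" using s_1_sq_pos by (simp add: g_def gain_def add_nonneg_pos)
  have a_nonneg: "0 \<le> a" using a c_1_pos by simp
  have y0: "block_energy y 0 = g * block_energy x 0" using block m_pos by (simp add: g_def)
  then show "0 < block_energy y 0" using g_pos pos by simp
  have "energy_ratio y \<le> (g - 2 * a * gap) * off_energy x / (g * block_energy x 0)"
    using off_energy_gain_le[OF block tail a_nonneg] g_pos pos
    by (simp add: energy_ratio_def y0 g_def divide_right_mono)
  also have "\<dots> = (1 - 2 * a * gap / g) * energy_ratio x"
    using g_pos by (simp add: energy_ratio_def field_simps)
  also have "\<dots> \<le> contraction * energy_ratio x"
  proof (rule mult_right_mono)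
    have "c 1 * g \<le> c 1 * 2" using gain_le_2[OF a_nonneg a(2)] m_pos c_1_pos by (simp add: g_def)
    then have "c 1 * g \<le> 2 * a" using a by linarith
    then have "(c 1 * g) * gap \<le> (2 * a) * gap" using gap_pos by (intro mult_right_mono) auto
    then have "c 1 * gap * g \<le> 2 * a * gap" by (simp add: ac_simps)
    then show "1 - 2 * a * gap / g \<le> contraction"
      using g_pos by (simp add: contraction_def field_simps)
  qed (rule energy_ratio_nonneg)
  finally show "energy_ratio y \<le> contraction * energy_ratio x" .
qed

lemma norm_n_scale: "norm_n (scale r x) = \<bar>r\<bar> * norm_n x"
  by (simp add: norm_n_def scale_def L2_set_scale)

lemma inner_n_scale: "inner_n (scale r x) (scale r x) = r\<^sup>2 * inner_n x x"
  by (simp add: inner_n_def scale_def sum_distrib_left power2_eq_square algebra_simps)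

lemma AT_shift_scale: "AT_shift b (scale r y) = scale r (AT_shift b y)"
  by (rule ext) (simp add: AT_shift_def AT_apply_def scale_def algebra_simps)

lemma normalize_n_scale: "0 < r \<Longrightarrow> normalize_n (scale r y) = normalize_n y"
  unfolding normalize_n_def norm_n_scale by (auto simp: scale_def)

lemma norm_n_pos: "0 < block_energy y 0 \<Longrightarrow> 0 < norm_n y"
  using inner_n_self_split[of y] off_energy_nonneg[of y] by (simp add: norm_n_eq_sqrt_inner)

lemma normalize_n_props:
  assumes "0 < block_energy y 0"
  shows "inner_n (normalize_n y) (normalize_n y) = 1" "0 < block_energy (normalize_n y) 0"
    "energy_ratio (normalize_n y) = energy_ratio y"
proof -
  have pos: "0 < inner_n y y" using inner_n_self_split[of y] off_energy_nonneg[of y] assms by simp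
  then have "(norm_n y)\<^sup>2 = inner_n y y" by (simp add: norm_n_eq_sqrt_inner)
  then show "inner_n (normalize_n y) (normalize_n y) = 1"
    using pos by (simp add: normalize_n_def inner_n_scale power_divide)
  show "0 < block_energy (normalize_n y) 0"
    using norm_n_pos[OF assms] assms by (simp add: normalize_n_def block_energy_scale)
  show "energy_ratio (normalize_n y) = energy_ratio y"
    using norm_n_pos[OF assms] by (simp add: normalize_n_def energy_ratio_def block_energy_scale off_energy_scale)
qed

lemma aci_map_eq_normalize_n:
  assumes "0 < norm_n (A_shift (rayleigh x) x)"
  shows "aci_map x =
    normalize_n (AT_shift (rayleigh (normalize_n (A_shift (rayleigh x) x))) (A_shift (rayleigh x) x))"
proof -
  define y where "y = A_shift (rayleigh x) x"
  have "normalize_n y = scale (1 / norm_n y) y" by (simp add: normalize_n_def)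
  then show ?thesis
    using assms by (simp add: aci_map_def Let_def y_def[symmetric] AT_shift_scale normalize_n_scale)
qed

text \<open>On the first block, \<open>(A\<^sup>T - b I) (A - a I)\<close> is \<open>first_gain a b\<close> times the identity plus
  \<open>s 1 (a - b)\<close> times a rotation by a right angle.\<close>
definition first_gain :: "real \<Rightarrow> real \<Rightarrow> real" where
  "first_gain a b = (c 1 - a) * (c 1 - b) + (s 1)\<^sup>2"

definition residual :: "real \<Rightarrow> real \<Rightarrow> (nat \<Rightarrow> real) \<Rightarrow> nat \<Rightarrow> real" where
  "residual a b x = (\<lambda>i. AT_shift b (A_shift a x) i - first_gain a b * x i)"

lemma first_gain_bounds:
  assumes "a \<in> {c 1..1}" "b \<in> {c 1..1}"
  shows "(s 1)\<^sup>2 \<le> first_gain a b" "first_gain a b \<le> 2"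
proof -
  have "0 \<le> (c 1 - a) * (c 1 - b)" using assms by (simp add: mult_nonpos_nonpos)
  then show "(s 1)\<^sup>2 \<le> first_gain a b" by (simp add: first_gain_def)
  have "\<bar>c 1 - a\<bar> * \<bar>c 1 - b\<bar> \<le> 1 * 1" using assms c_1_pos by (intro mult_mono) auto
  then have "(c 1 - a) * (c 1 - b) \<le> 1" by (simp add: abs_mult[symmetric])
  then show "first_gain a b \<le> 2" using s_1_sq_le_1 by (simp add: first_gain_def)
qed

lemma first_gain_sq_le_4:
  assumes "a \<in> {c 1..1}" "b \<in> {c 1..1}"
  shows "(first_gain a b)\<^sup>2 \<le> 4"
proof -
  have "0 \<le> first_gain a b" using first_gain_bounds(1)[OF assms] zero_le_power2[of "s 1"] by linarith
  then show ?thesis using first_gain_bounds(2)[OF assms] power_mono[of "first_gain a b" 2 2] by simp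
qed

lemma block_energy_residual_first:
  "block_energy (residual a b x) 0 = (s 1)\<^sup>2 * (a - b)\<^sup>2 * block_energy x 0"
proof -
  have m: "0 < m" using m_pos by simp
  show ?thesis
    using A_apply_even[OF m] A_apply_odd[OF m] AT_apply_even[OF m] AT_apply_odd[OF m]
    by (simp add: block_energy_def residual_def first_gain_def AT_shift_def A_shift_def)
      (simp add: power2_eq_square algebra_simps)
qed

lemma block_energy_residual_le:
  assumes ab: "a \<in> {c 1..1}" "b \<in> {c 1..1}" and j: "j < m"
  shows "block_energy (residual a b x) j \<le> 16 * block_energy x j"
proof -
  have k: "j + 1 \<in> {1..m}" using j by simp
  note first_gain_sq = first_gain_sq_le_4[OF ab]
  have "block_energy (AT_shift b (A_shift a x)) j = gain b (j + 1) * (gain a (j + 1) * block_energy x j)"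
    using j by (simp add: block_energy_AT_shift block_energy_A_shift)
  also have "\<dots> \<le> 2 * (2 * block_energy x j)"
    using gain_le_2[OF _ _ k] gain_nonneg ab c_1_pos block_energy_nonneg[of x j]
    by (intro mult_mono) (auto intro: mult_nonneg_nonneg)
  finally have two_shifts: "block_energy (AT_shift b (A_shift a x)) j \<le> 4 * block_energy x j" by simp
  have "block_energy (residual a b x) j
      \<le> 2 * block_energy (AT_shift b (A_shift a x)) j + 2 * (first_gain a b)\<^sup>2 * block_energy x j"
    using square_diff_le[of "AT_shift b (A_shift a x) (2 * j)" "first_gain a b * x (2 * j)"]
      square_diff_le[of "AT_shift b (A_shift a x) (Suc (2 * j))" "first_gain a b * x (Suc (2 * j))"]
    by (simp add: residual_def block_energy_def power_mult_distrib algebra_simps)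
  also have "\<dots> \<le> 2 * (2 * (2 * block_energy x j)) + 2 * 4 * block_energy x j"
    using two_shifts first_gain_sq block_energy_nonneg[of x j] by (intro add_mono mult_right_mono) auto
  finally show ?thesis by simp
qed

lemma tail_energy_residual_le:
  assumes ab: "a \<in> {c 1..1}" "b \<in> {c 1..1}"
  shows "tail_energy (residual a b x) \<le> 16 * tail_energy x"
proof -
  have "tail_energy (AT_shift b (A_shift a x)) = (1 - b)\<^sup>2 * ((1 - a)\<^sup>2 * tail_energy x)"
    by (simp add: tail_energy_AT_shift tail_energy_A_shift)
  also have "\<dots> \<le> 1 * (1 * tail_energy x)"
    using ab c_1_pos tail_energy_nonneg[of x]
    by (intro mult_mono) (auto intro!: power_le_one mult_left_le_one_le)
  finally have two_shifts: "tail_energy (AT_shift b (A_shift a x)) \<le> tail_energy x" by simp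
  have "tail_energy (residual a b x)
      \<le> 2 * tail_energy (AT_shift b (A_shift a x)) + 2 * (first_gain a b)\<^sup>2 * tail_energy x"
    using square_diff_le[of "AT_shift b (A_shift a x) (2 * m)" "first_gain a b * x (2 * m)"]
    by (simp add: residual_def tail_energy_def power_mult_distrib algebra_simps)
  also have "\<dots> \<le> 2 * tail_energy x + 2 * 4 * tail_energy x"
    using two_shifts first_gain_sq_le_4[OF ab] tail_energy_nonneg[of x]
    by (intro add_mono mult_right_mono) auto
  finally show ?thesis using tail_energy_nonneg[of x] by simp
qed

lemma block_energy_0_le_1: "inner_n x x = 1 \<Longrightarrow> block_energy x 0 \<le> 1"
  using inner_n_self_split[of x] off_energy_nonneg[of x] by simp

lemma off_energy_le_energy_ratio:
  assumes "inner_n x x = 1" "0 < block_energy x 0"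
  shows "off_energy x \<le> energy_ratio x"
proof -
  have "off_energy x = energy_ratio x * block_energy x 0" using assms(2) by (simp add: energy_ratio_def)
  also have "\<dots> \<le> energy_ratio x * 1"
    using block_energy_0_le_1[OF assms(1)] energy_ratio_nonneg by (intro mult_left_mono) auto
  finally show ?thesis by simp
qed

lemma norm_n_residual_le:
  assumes unit: "inner_n x x = 1" and ab: "a \<in> {c 1..1}" "b \<in> {c 1..1}"
  shows "norm_n (residual a b x) \<le> sqrt ((a - b)\<^sup>2 + 16 * off_energy x)"
proof -
  have "block_energy (residual a b x) 0 \<le> 1 * (a - b)\<^sup>2 * 1"
    unfolding block_energy_residual_first
    using s_1_sq_le_1 block_energy_0_le_1[OF unit] block_energy_nonneg by (intro mult_mono) auto
  moreover have "off_energy (residual a b x) \<le> 16 * off_energy x"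
    using block_energy_residual_le[OF ab] tail_energy_residual_le[OF ab]
    by (auto simp: off_energy_def sum_distrib_left distrib_left intro!: add_mono sum_mono)
  ultimately show ?thesis
    unfolding norm_n_eq_sqrt_inner inner_n_self_split by (intro real_sqrt_le_mono) simp
qed

lemma aci_map_half_steps:
  assumes unit: "inner_n x x = 1" and pos: "0 < block_energy x 0"
  defines "a \<equiv> rayleigh x" and "b \<equiv> rayleigh (normalize_n (A_shift (rayleigh x) x))"
  shows "a \<in> {c 1..1}" "b \<in> {c 1..1}" "\<bar>a - b\<bar> \<le> energy_ratio x"
    "0 < block_energy (AT_shift b (A_shift a x)) 0"
    "energy_ratio (AT_shift b (A_shift a x)) \<le> contraction * energy_ratio x"
    "aci_map x = normalize_n (AT_shift b (A_shift a x))"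
proof -
  have a: "a \<in> {c 1..1}" "a - c 1 \<le> off_energy x" using rayleigh_bounds[OF unit] by (auto simp: a_def)
  define y where "y = A_shift a x"
  have y: "0 < block_energy y 0" "energy_ratio y \<le> contraction * energy_ratio x"
    using energy_ratio_contracts[of y a x] block_energy_A_shift tail_energy_A_shift a pos
    by (auto simp: y_def)
  have y_le_x: "energy_ratio y \<le> energy_ratio x"
    using y(2) mult_left_le_one_le[OF energy_ratio_nonneg[of x]] contraction_pos contraction_less_1
    by (meson less_imp_le order.trans)
  define w where "w = normalize_n y"
  have w: "inner_n w w = 1" "0 < block_energy w 0" "energy_ratio w = energy_ratio y"
    using normalize_n_props[OF y(1)] by (simp_all add: w_def)
  have b: "b \<in> {c 1..1}" "b - c 1 \<le> off_energy w"
    using rayleigh_bounds[OF w(1)] by (auto simp: a_def b_def w_def y_def)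
  show "a \<in> {c 1..1}" "b \<in> {c 1..1}" using a b by simp_all
  show "\<bar>a - b\<bar> \<le> energy_ratio x"
    using a b off_energy_le_energy_ratio[OF unit pos] off_energy_le_energy_ratio[OF w(1,2)] w(3) y_le_x
    by auto
  have u: "0 < block_energy (AT_shift b y) 0" "energy_ratio (AT_shift b y) \<le> contraction * energy_ratio y"
    using energy_ratio_contracts[of "AT_shift b y" b y] block_energy_AT_shift tail_energy_AT_shift b y(1)
    by auto
  then show "0 < block_energy (AT_shift b (A_shift a x)) 0" by (simp add: y_def)
  have "energy_ratio (AT_shift b y) \<le> contraction * energy_ratio x"
    using u(2) y_le_x contraction_pos by (meson mult_left_mono less_imp_le order.trans)
  then show "energy_ratio (AT_shift b (A_shift a x)) \<le> contraction * energy_ratio x" by (simp add: y_def)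
  show "aci_map x = normalize_n (AT_shift b (A_shift a x))"
    using aci_map_eq_normalize_n norm_n_pos[OF y(1)] by (simp add: a_def b_def y_def)
qed

lemma aci_map_step:
  assumes "inner_n x x = 1" "0 < block_energy x 0"
  shows "inner_n (aci_map x) (aci_map x) = 1" "0 < block_energy (aci_map x) 0"
    "energy_ratio (aci_map x) \<le> contraction * energy_ratio x"
  using normalize_n_props[OF aci_map_half_steps(4)[OF assms]] aci_map_half_steps(5,6)[OF assms]
  by simp_all

lemma aci_map_displacement_le:
  assumes unit: "inner_n x x = 1" and pos: "0 < block_energy x 0"
  shows "norm_n (\<lambda>i. aci_map x i - x i)
    \<le> 2 / (s 1)\<^sup>2 * sqrt ((energy_ratio x)\<^sup>2 + 16 * energy_ratio x)"
proof -
  define a where "a = rayleigh x"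
  define b where "b = rayleigh (normalize_n (A_shift a x))"
  define u where "u = AT_shift b (A_shift a x)"
  note half = aci_map_half_steps[OF unit pos, folded a_def, folded b_def, folded u_def]
  text \<open>The unnormalised result \<open>u\<close> is \<open>first_gain a b \<cdot> x\<close> up to the residual, which is small
    because \<open>a\<close> and \<open>b\<close> are close and \<open>x\<close> is concentrated on the first block.\<close>
  have "(a - b)\<^sup>2 \<le> (energy_ratio x)\<^sup>2"
    using half(3) energy_ratio_nonneg[of x] by (metis abs_le_square_iff abs_of_nonneg)
  then have "sqrt ((a - b)\<^sup>2 + 16 * off_energy x) \<le> sqrt ((energy_ratio x)\<^sup>2 + 16 * energy_ratio x)"
    using off_energy_le_energy_ratio[OF unit pos] by (intro real_sqrt_le_mono) linarith
  then have residual: "norm_n (residual a b x) \<le> sqrt ((energy_ratio x)\<^sup>2 + 16 * energy_ratio x)"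
    using norm_n_residual_le[OF unit half(1,2)] by linarith
  have x_norm: "L2_set x {0..<n} = 1" using norm_n_eq_sqrt_inner[of x] unit by (simp add: norm_n_def)
  have gain_pos: "(s 1)\<^sup>2 \<le> first_gain a b" "0 < first_gain a b"
    using first_gain_bounds(1)[OF half(1,2)] s_1_sq_pos by linarith+
  have "norm_n (\<lambda>i. aci_map x i - x i) = L2_set (\<lambda>i. u i / L2_set u {0..<n} - x i) {0..<n}"
    by (simp add: half(6) normalize_n_def scale_def norm_n_def)
  also have "\<dots> \<le> 2 * norm_n (residual a b x) / first_gain a b"
    using L2_set_normalize_diff_le[OF x_norm _ gain_pos(2), of u] norm_n_pos[OF half(4)]
    by (simp add: norm_n_def residual_def u_def)
  also have "\<dots> \<le> 2 * sqrt ((energy_ratio x)\<^sup>2 + 16 * energy_ratio x) / (s 1)\<^sup>2"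
    using residual gain_pos s_1_sq_pos energy_ratio_nonneg[of x] by (intro frac_le) auto
  finally show ?thesis by simp
qed

section \<open>Convergence of the iterates\<close>

lemma energies_cong:
  assumes "\<forall>i<n. y i = z i"
  shows "inner_n y y = inner_n z z" "block_energy y 0 = block_energy z 0"
    "energy_ratio y = energy_ratio z"
proof -
  show "inner_n y y = inner_n z z" using assms by (simp add: inner_n_def)
  have block: "block_energy y j = block_energy z j" if "j < m" for j
    using that assms n_def by (simp add: block_energy_def)
  then show "block_energy y 0 = block_energy z 0" using m_pos by simp
  have "tail_energy y = tail_energy z" using assms n_def by (simp add: tail_energy_def)
  then show "energy_ratio y = energy_ratio z"
    using block m_pos by (simp add: energy_ratio_def off_energy_def)
qed

lemma aci_iterates_invariant:
  assumes step: "\<And>k. \<forall>i<n. xs (Suc k) i = aci_map (xs k) i"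
    and unit: "inner_n (xs 0) (xs 0) = 1" and pos: "0 < block_energy (xs 0) 0"
  shows "inner_n (xs k) (xs k) = 1 \<and> 0 < block_energy (xs k) 0
    \<and> energy_ratio (xs k) \<le> contraction ^ k * energy_ratio (xs 0)"
proof (induction k)
  case (Suc k)
  then have "inner_n (xs k) (xs k) = 1" "0 < block_energy (xs k) 0" by auto
  note step_k = aci_map_step[OF this] and cong = energies_cong[OF step[of k]]
  have "energy_ratio (xs (Suc k)) \<le> contraction * energy_ratio (xs k)" using step_k cong by simp
  also have "\<dots> \<le> contraction * (contraction ^ k * energy_ratio (xs 0))"
    using Suc contraction_pos by (intro mult_left_mono) auto
  finally show ?case using step_k cong by simp
qed (use unit pos in simp)

lemma aci_iterates_convergent:
  assumes step: "\<And>k. \<forall>i<n. xs (Suc k) i = aci_map (xs k) i"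
    and unit: "inner_n (xs 0) (xs 0) = 1" and pos: "0 < block_energy (xs 0) 0" and i: "i < n"
  shows "convergent (\<lambda>k. xs k i)"
proof -
  define R where "R = energy_ratio (xs 0)"
  define C where "C = 2 / (s 1)\<^sup>2 * sqrt (R\<^sup>2 + 16 * R)"
  have increment: "\<bar>xs (Suc k) i - xs k i\<bar> \<le> C * sqrt contraction ^ k" for k
  proof -
    note inv = aci_iterates_invariant[OF step unit pos, of k]
    have ratio: "0 \<le> energy_ratio (xs k)" "energy_ratio (xs k) \<le> contraction ^ k * R"
      using inv energy_ratio_nonneg by (auto simp: R_def)
    have "\<bar>xs (Suc k) i - xs k i\<bar> \<le> L2_set (\<lambda>i. \<bar>xs (Suc k) i - xs k i\<bar>) {0..<n}"
      using i by (intro member_le_L2_set) auto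
    also have "\<dots> = norm_n (\<lambda>i. aci_map (xs k) i - xs k i)"
      using step[of k] by (simp add: norm_n_def L2_set_def)
    also have "\<dots> \<le> 2 / (s 1)\<^sup>2 * sqrt ((energy_ratio (xs k))\<^sup>2 + 16 * energy_ratio (xs k))"
      using aci_map_displacement_le inv by blast
    also have "\<dots> \<le> 2 / (s 1)\<^sup>2 * sqrt (contraction ^ k * (R\<^sup>2 + 16 * R))"
    proof -
      have power: "0 \<le> contraction ^ k" "contraction ^ k \<le> 1"
        using contraction_pos contraction_less_1 by (auto intro: power_le_one)
      have "(energy_ratio (xs k))\<^sup>2 \<le> (contraction ^ k * R)\<^sup>2" using ratio by (intro power_mono) auto
      also have "\<dots> = contraction ^ k * (contraction ^ k * R\<^sup>2)" by (simp add: power2_eq_square)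
      also have "\<dots> \<le> contraction ^ k * R\<^sup>2"
        using power by (intro mult_left_le_one_le mult_nonneg_nonneg) auto
      finally have "(energy_ratio (xs k))\<^sup>2 + 16 * energy_ratio (xs k) \<le> contraction ^ k * (R\<^sup>2 + 16 * R)"
        using ratio by (simp add: algebra_simps)
      then show ?thesis using s_1_sq_pos by (intro mult_left_mono real_sqrt_le_mono) auto
    qed
    also have "\<dots> = C * sqrt contraction ^ k"
      using contraction_pos by (simp add: C_def real_sqrt_mult real_sqrt_power)
    finally show ?thesis .
  qed
  show ?thesis
    using increment contraction_pos contraction_less_1
    by (intro convergent_if_increments_le_geometric[of _ C "sqrt contraction"]) auto
qed

end

theorem theorem4p8:
  fixes m n :: nat and c s :: "nat \<Rightarrow> real" and t :: bool and v0 :: "real vec"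
  assumes "m \<ge> 1"
    and "n = 2 * m + (if t then 1 else 0)"
    and "\<forall>j\<in>{1..m}. (c j)\<^sup>2 + (s j)\<^sup>2 = 1"
    and "\<forall>j\<in>{1..m}. s j \<noteq> 0"
    and "0 < c 1"
    and "\<forall>j\<in>{1..<m}. c j < c (Suc j)"
    and "c m < 1"
    and "v0 \<in> carrier_vec n"
    and "vnorm v0 = 1"
    and "grade (rot_block_mat m c s t) v0 \<ge> 2"
    and "v0 $ 0 \<noteq> 0 \<or> v0 $ 1 \<noteq> 0"
  shows "\<exists>L \<in> carrier_vec n. \<forall>i<n.
           (\<lambda>k. aci (rot_block_mat m c s t) v0 k $ i) \<longlonglongrightarrow> L $ i"
proof -
  interpret rotation_blocks m n c s t
    using assms(1-7) by unfold_locales auto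
  define xs where "xs k = ($) (aci A v0 k)" for k
  have aci_Suc: "aci A v0 (Suc k) = aci_step A (aci A v0 k)" for k by (simp add: aci_def)
  have carrier: "aci A v0 k \<in> carrier_vec n" for k
    by (induction k) (simp_all add: aci_def assms(8) aci_Suc aci_step_eq_aci_map)
  have step: "\<forall>i<n. xs (Suc k) i = aci_map (xs k) i" for k
    using aci_step_eq_aci_map[OF carrier[of k]] by (simp add: xs_def aci_Suc)
  have xs_0: "xs 0 = ($) v0" by (simp add: xs_def aci_def fun_eq_iff)
  have unit: "inner_n (xs 0) (xs 0) = 1"
    using vnorm_eq_norm_n[OF assms(8), of "xs 0"] assms(9) xs_0 by (simp add: norm_n_eq_sqrt_inner)
  have pos: "0 < block_energy (xs 0) 0"
    using assms(11) xs_0 by (auto simp: block_energy_def add_pos_nonneg add_nonneg_pos)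
  show ?thesis
  proof (intro bexI[of _ "vec n (\<lambda>i. lim (\<lambda>k. xs k i))"] allI impI)
    fix i assume "i < n"
    then show "(\<lambda>k. aci A v0 k $ i) \<longlonglongrightarrow> vec n (\<lambda>i. lim (\<lambda>k. xs k i)) $ i"
      using aci_iterates_convergent[OF step unit pos] by (simp add: convergent_LIMSEQ_iff xs_def)
  qed simp
qed

end
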